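(* Let $X$ and $Y$ be topological spaces that are $T_1$ and regular, let $X$ be submetrizable, and let $f\colon X \to Y$ be a continuous surjective map which is closed and sequence-covering. Then $f$ is 1-sequence-covering.
   Context: A topological space $\langle X,\tau_X\rangle$ is submetrizable if there is a metrizable topology $\sigma$ on $X$ with $\sigma\subseteq\tau_X$ (equivalently, $X$ admits a continuous one-to-one map onto a metrizable space). A map is closed if images of closed sets are closed. For a space $Z$ and $z\in Z$, let $\mathsf{ConvSeq}(Z,z)$ denote the set of non-trivial (i.e. not eventually constant) sequences in $Z$ converging to $z$, and $\mathsf{ConvSeq}(Z)=\bigcup_{z\in Z}\mathsf{ConvSeq}(Z,z)$. For sequences $q=\langle q(n)\rangle_{n\in\omega}$ in $X$ and $p=\langle p(n)\rangle_{n\in\omega}$ in $Y$, say $q$ covers $p$ if $f(q(n))=p(n)$ for all $n\in\omega$. The map $f$ is sequence-covering if for every $p\in\mathsf{ConvSeq}(Y)$ there is $q\in\mathsf{ConvSeq}(X)$ covering $p$. The map $f$ is 1-sequence-covering if for every $y\in Y$ there is $x\in f^{-1}(y)$ such that for every $p\in\mathsf{ConvSeq}(Y,y)$ there is $q\in\mathsf{ConvSeq}(X,x)$ covering $p$. *)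

theory Defs
  imports "HOL-Analysis.Analysis"
begin

definition submetrizable :: "'a topology \<Rightarrow> bool" where
  "submetrizable X \<longleftrightarrow>
     (\<exists>S :: 'a topology. topspace S = topspace X \<and> metrizable_space S \<and>
        (\<forall>U. openin S U \<longrightarrow> openin X U))"

definition ConvSeq_at :: "'a topology \<Rightarrow> 'a \<Rightarrow> (nat \<Rightarrow> 'a) set" where
  "ConvSeq_at Z z = {q. (\<forall>n. q n \<in> topspace Z) \<and> limitin Z q z sequentially \<and>
                        \<not> (\<exists>c. eventually (\<lambda>n. q n = c) sequentially)}"

definition ConvSeq :: "'a topology \<Rightarrow> (nat \<Rightarrow> 'a) set" where
  "ConvSeq Z = (\<Union>z\<in>topspace Z. ConvSeq_at Z z)"

definition covers :: "('a \<Rightarrow> 'b) \<Rightarrow> (nat \<Rightarrow> 'a) \<Rightarrow> (nat \<Rightarrow> 'b) \<Rightarrow> bool" where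
  "covers f q p \<longleftrightarrow> (\<forall>n. f (q n) = p n)"

definition sequence_covering :: "'a topology \<Rightarrow> 'b topology \<Rightarrow> ('a \<Rightarrow> 'b) \<Rightarrow> bool" where
  "sequence_covering X Y f \<longleftrightarrow> (\<forall>p\<in>ConvSeq Y. \<exists>q\<in>ConvSeq X. covers f q p)"

definition one_sequence_covering :: "'a topology \<Rightarrow> 'b topology \<Rightarrow> ('a \<Rightarrow> 'b) \<Rightarrow> bool" where
  "one_sequence_covering X Y f \<longleftrightarrow>
     (\<forall>y\<in>topspace Y. \<exists>x\<in>topspace X. f x = y \<and>
        (\<forall>p\<in>ConvSeq_at Y y. \<exists>q\<in>ConvSeq_at X x. covers f q p))"

end

theory Submission
  imports Defs
begin

(* Let d be a metric whose topology is coarser than that of X, fix y in Y, and for a non-trivial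
   sequence p converging to y let L(p) be the set of points of the fibre over y at which some lift
   of p converges with respect to d.  Sequence-covering and continuity make L(p) non-empty.  Closedness
   of f makes L(p) d-compact: by a diagonal argument, lifts of p through points of L(p) yield a
   sequence avoiding the fibre whose image still converges to y, and the closure of such a sequence
   must meet the fibre.  Since L(p) and L(p') contain L of the interleaving of p and p', the family
   L(p) is directed, so compactness gives a point x common to all of them.  A d-convergent lift of p
   at x, moved to x wherever p equals y, then converges in X: otherwise a subsequence avoids a
   neighbourhood of x, and its X-closure meets the fibre, while its d-closure adds only x. *)

lemma covers_iff_comp: "covers f q p \<longleftrightarrow> f \<circ> q = p"
  by (auto simp: covers_def)

lemma not_eventually_const_if_covers:
  assumes "covers f q p" and "\<nexists>c. \<forall>\<^sub>F n in sequentially. p n = c"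
  shows "\<nexists>c. \<forall>\<^sub>F n in sequentially. q n = c"
proof
  assume "\<exists>c. \<forall>\<^sub>F n in sequentially. q n = c"
  then obtain c where "\<forall>\<^sub>F n in sequentially. q n = c"
    by blast
  then have "\<forall>\<^sub>F n in sequentially. p n = f c"
    by eventually_elim (use assms(1) in \<open>auto simp: covers_def\<close>)
  with assms(2) show False
    by blast
qed

lemma strict_mono_choice_frequently:
  assumes "\<And>n. \<exists>\<^sub>F k in sequentially. P n k"
  shows "\<exists>r::nat \<Rightarrow> nat. strict_mono r \<and> (\<forall>n. P n (r n))"
proof -
  have "\<forall>n N. \<exists>k>N. P n k"
    using assms unfolding frequently_sequentially by (meson Suc_le_lessD)
  then obtain g where g: "\<And>n N. g n N > N \<and> P n (g n N)"
    by metis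
  define r where "r = rec_nat (g 0 0) (\<lambda>n rn. g (Suc n) rn)"
  have "P n (r n)" for n
    using g by (cases n) (simp_all add: r_def)
  moreover have "strict_mono r"
    using g by (simp add: strict_mono_Suc_iff r_def)
  ultimately show ?thesis by blast
qed

lemma closed_map_limit_in_image_closure:
  assumes "closed_map X Y f" and "range z \<subseteq> topspace X"
    and "limitin Y (f \<circ> z) y sequentially"
  obtains w where "w \<in> X closure_of range z" and "f w = y"
proof -
  have "y \<in> Y closure_of (f ` range z)"
    unfolding in_closure_of
  proof (intro conjI allI impI)
    show "y \<in> topspace Y"
      using assms(3) by (rule limitin_topspace)
    fix T assume "y \<in> T \<and> openin Y T"
    then have "\<forall>\<^sub>F n in sequentially. f (z n) \<in> T"
      using assms(3) by (auto simp: limitin_def)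
    then obtain n where "f (z n) \<in> T"
      by (auto simp: eventually_sequentially)
    then show "\<exists>u. u \<in> f ` range z \<and> u \<in> T"
      by blast
  qed
  also have "\<dots> \<subseteq> Y closure_of (f ` (X closure_of range z))"
    using assms(2) by (intro closure_of_mono image_mono closure_of_subset)
  also have "\<dots> = f ` (X closure_of range z)"
    using assms(1) by (simp add: closed_map_def closure_of_closedin)
  finally show ?thesis
    using that by blast
qed

context Metric_space
begin

lemma limitin_metric_if_dist_tendsto_0:
  assumes "limitin mtopology b w sequentially" and "range a \<subseteq> M"
    and "(\<lambda>n. d (a n) (b n)) \<longlonglongrightarrow> 0"
  shows "limitin mtopology a w sequentially"
  unfolding limitin_metric_dist_null
proof (intro conjI)
  have b: "w \<in> M" "\<forall>\<^sub>F n in sequentially. b n \<in> M" "(\<lambda>n. d (b n) w) \<longlonglongrightarrow> 0"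
    using assms(1) by (simp_all add: limitin_metric_dist_null)
  show "w \<in> M"
    using b(1) .
  show "\<forall>\<^sub>F n in sequentially. a n \<in> M"
    using assms(2) by (auto intro: always_eventually)
  have "\<forall>\<^sub>F n in sequentially. d (a n) w \<le> d (a n) (b n) + d (b n) w"
    using b(2) by eventually_elim (use assms(2) b(1) triangle in blast)
  then show "(\<lambda>n. d (a n) w) \<longlonglongrightarrow> 0"
    by (rule tendsto_sandwich[OF always_eventually _ tendsto_const tendsto_add_zero[OF assms(3) b(3)],
          rotated]) simp
qed

lemma limitin_metric_replace_by_limit:
  assumes "limitin mtopology q x sequentially"
  shows "limitin mtopology (\<lambda>n. if P n then x else q n) x sequentially"
  unfolding limitin_metric
proof (intro conjI allI impI)
  show "x \<in> M"
    using assms limitin_mspace by blast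
  fix e :: real assume "e > 0"
  then have "\<forall>\<^sub>F n in sequentially. q n \<in> M \<and> d (q n) x < e"
    using assms unfolding limitin_metric by blast
  then show "\<forall>\<^sub>F n in sequentially. (if P n then x else q n) \<in> M \<and> d (if P n then x else q n) x < e"
    by eventually_elim (use \<open>e > 0\<close> \<open>x \<in> M\<close> in auto)
qed

lemma limitin_metric_if_dist_less_inverse:
  assumes "w \<in> M" and "range a \<subseteq> M" and "\<And>n. d (a n) w < 1 / Suc n"
  shows "limitin mtopology a w sequentially"
proof (rule limitin_metric_if_dist_tendsto_0[of "\<lambda>_. w"])
  show "limitin mtopology (\<lambda>_. w) w sequentially"
    using assms(1) by simp
  show "(\<lambda>n. d (a n) w) \<longlonglongrightarrow> 0"
    using assms(3) by (intro LIMSEQ_norm_0) simp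
qed (use assms(2) in simp)

lemma convergent_subsequence_if_in_closure_of_range:
  fixes z :: "nat \<Rightarrow> 'a"
  assumes "w \<in> mtopology closure_of range z" and "w \<notin> range z" and "range z \<subseteq> M"
  shows "\<exists>r. strict_mono r \<and> limitin mtopology (z \<circ> r) w sequentially"
proof -
  have tail: "w \<in> mtopology closure_of (z ` {N..})" for N
  proof -
    have "z ` {..<N} \<subseteq> topspace mtopology" "finite (z ` {..<N})"
      using assms(3) by auto
    then have "closedin mtopology (z ` {..<N})"
      by (rule closedin_Hausdorff_finite[OF Hausdorff_space_mtopology])
    then have "w \<notin> mtopology closure_of (z ` {..<N})"
      using assms(2) by (auto simp: closure_of_closedin)
    moreover have "range z = z ` {..<N} \<union> z ` {N..}"
      by (auto simp: image_iff) (metis atLeast_iff lessThan_iff not_le)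
    ultimately show ?thesis
      using assms(1) by (metis UnE closure_of_Un)
  qed
  have "\<exists>\<^sub>F k in sequentially. d (z k) w < 1 / Suc n" for n
    unfolding frequently_sequentially
  proof
    fix N
    have "\<forall>e>0. \<exists>y\<in>z ` {N..}. y \<in> mball w e"
      using tail[of N] by (simp add: metric_closure_of)
    then obtain y where "y \<in> z ` {N..}" "y \<in> mball w (1 / Suc n)"
      by (meson of_nat_0_less_iff zero_less_Suc zero_less_divide_1_iff)
    then show "\<exists>k\<ge>N. d (z k) w < 1 / Suc n"
      by (auto simp: commute)
  qed
  then obtain r where "strict_mono r" "\<And>n. d (z (r n)) w < 1 / Suc n"
    using strict_mono_choice_frequently[of "\<lambda>n k. d (z k) w < 1 / Suc n"] by blast
  moreover have "w \<in> M"
    using assms(1) by (simp add: in_closure_of)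
  moreover have "range (z \<circ> r) \<subseteq> M"
    using assms(3) by auto
  ultimately show ?thesis
    using limitin_metric_if_dist_less_inverse[of w "z \<circ> r"] by auto
qed

lemma diagonal_limitin_metric:
  assumes "\<And>n k. Q n k \<in> M" and "\<And>n. limitin mtopology (Q n) (\<sigma> n) sequentially"
    and "limitin mtopology \<sigma> w sequentially"
  shows "\<exists>j. limitin mtopology (\<lambda>k. Q (j k) k) w sequentially"
proof
  define j where "j k = arg_min_on (\<lambda>n. d (Q n k) w) {..k}" for k
  have closest: "d (Q (j k) k) w \<le> d (Q n k) w" if "n \<le> k" for n k
    using arg_min_if_finite(2)[of "{..k}" "\<lambda>n. d (Q n k) w"] that by (auto simp: j_def not_less)
  show "limitin mtopology (\<lambda>k. Q (j k) k) w sequentially"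
    unfolding limitin_metric
  proof (intro conjI allI impI)
    show "w \<in> M"
      using assms(3) limitin_mspace by blast
    fix e :: real assume "e > 0"
    then have "e/2 > 0"
      by simp
    then have "\<forall>\<^sub>F n in sequentially. \<sigma> n \<in> M \<and> d (\<sigma> n) w < e/2"
      using assms(3) unfolding limitin_metric by blast
    then obtain n where n: "\<sigma> n \<in> M" "d (\<sigma> n) w < e/2"
      by (auto simp: eventually_sequentially)
    have "\<forall>\<^sub>F k in sequentially. Q n k \<in> M \<and> d (Q n k) (\<sigma> n) < e/2"
      using assms(2) \<open>e/2 > 0\<close> unfolding limitin_metric by blast
    moreover have "\<forall>\<^sub>F k in sequentially. n \<le> k"
      by (rule eventually_ge_at_top)
    ultimately show "\<forall>\<^sub>F k in sequentially. Q (j k) k \<in> M \<and> d (Q (j k) k) w < e"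
    proof eventually_elim
      case (elim k)
      have "d (Q n k) w \<le> d (Q n k) (\<sigma> n) + d (\<sigma> n) w"
        using triangle assms(1) n(1) \<open>w \<in> M\<close> by blast
      with closest[OF elim(2)] have "d (Q (j k) k) w \<le> d (Q n k) (\<sigma> n) + d (\<sigma> n) w"
        by linarith
      then show ?case
        using elim(1) n(2) assms(1) by auto
    qed
  qed
qed

end

definition interleave :: "(nat \<Rightarrow> 'a) \<Rightarrow> (nat \<Rightarrow> 'a) \<Rightarrow> nat \<Rightarrow> 'a" where
  "interleave p q n = (if even n then p (n div 2) else q (n div 2))"

lemma interleave_even [simp]: "interleave p q (2 * n) = p n"
  and interleave_odd [simp]: "interleave p q (Suc (2 * n)) = q n"
  by (simp_all add: interleave_def)

lemma interleave_comp_even: "interleave p q \<circ> (\<lambda>n. 2 * n) = p"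
  and interleave_comp_odd: "interleave p q \<circ> (\<lambda>n. Suc (2 * n)) = q"
  by auto

lemma strict_mono_double: "strict_mono (\<lambda>n::nat. 2 * n)"
  and strict_mono_Suc_double: "strict_mono (\<lambda>n::nat. Suc (2 * n))"
  by (auto simp: strict_mono_def)

lemma eventually_interleave:
  assumes "\<forall>\<^sub>F n in sequentially. P (p n)" and "\<forall>\<^sub>F n in sequentially. P (q n)"
  shows "\<forall>\<^sub>F n in sequentially. P (interleave p q n)"
proof -
  obtain N where "\<And>n. n \<ge> N \<Longrightarrow> P (p n) \<and> P (q n)"
    using eventually_conj[OF assms] by (auto simp: eventually_sequentially)
  then have "\<And>n. n \<ge> 2 * N \<Longrightarrow> P (interleave p q n)"
    by (simp add: interleave_def)
  then show ?thesis
    by (auto simp: eventually_sequentially)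
qed

lemma interleave_in_ConvSeq_at:
  assumes "p \<in> ConvSeq_at Y y" and "q \<in> ConvSeq_at Y y"
  shows "interleave p q \<in> ConvSeq_at Y y"
  unfolding ConvSeq_at_def
proof (intro CollectI conjI allI notI)
  show "interleave p q n \<in> topspace Y" for n
    using assms by (simp add: ConvSeq_at_def interleave_def)
  show "limitin Y (interleave p q) y sequentially"
    using assms unfolding limitin_def ConvSeq_at_def by (auto intro: eventually_interleave)
  assume "\<exists>c. \<forall>\<^sub>F n in sequentially. interleave p q n = c"
  then obtain c where "\<forall>\<^sub>F n in sequentially. interleave p q n = c"
    by blast
  from eventually_subseq[OF strict_mono_double this]
  have "\<forall>\<^sub>F n in sequentially. p n = c"
    by simp
  then show False
    using assms(1) by (simp add: ConvSeq_at_def)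
qed

lemma Inter_directed_compactin_nonempty:
  assumes "Hausdorff_space T" and "i0 \<in> I" and "\<And>i. i \<in> I \<Longrightarrow> compactin T (K i)"
    and "\<And>i. i \<in> I \<Longrightarrow> K i \<noteq> {}"
    and directed: "\<And>i j. i \<in> I \<Longrightarrow> j \<in> I \<Longrightarrow> \<exists>k\<in>I. K k \<subseteq> K i \<inter> K j"
  shows "(\<Inter>i\<in>I. K i) \<noteq> {}"
proof -
  have below_finite: "\<exists>k\<in>I. K k \<subseteq> K i0 \<inter> \<Inter>(K ` J)" if "finite J" "J \<subseteq> I" for J
    using that
  proof (induction J rule: finite_induct)
    case empty
    then show ?case using assms(2) by blast
  next
    case (insert j J)
    then obtain k where k: "k \<in> I" "K k \<subseteq> K i0 \<inter> \<Inter>(K ` J)"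
      by auto
    moreover obtain k' where "k' \<in> I" "K k' \<subseteq> K k \<inter> K j"
      using directed[OF k(1), of j] insert.prems by blast
    ultimately show ?case
      by blast
  qed
  have closed: "\<forall>C\<in>K ` I. closedin T C"
    using assms(1,3) compactin_imp_closedin by blast
  have fip: "\<forall>\<F>. finite \<F> \<and> \<F> \<subseteq> K ` I \<longrightarrow> K i0 \<inter> \<Inter>\<F> \<noteq> {}"
  proof (intro allI impI)
    fix \<F> assume "finite \<F> \<and> \<F> \<subseteq> K ` I"
    then obtain J where "J \<subseteq> I" "finite J" "\<F> = K ` J"
      by (meson finite_subset_image)
    moreover from below_finite[OF \<open>finite J\<close> \<open>J \<subseteq> I\<close>]
    obtain k where "k \<in> I" "K k \<subseteq> K i0 \<inter> \<Inter>(K ` J)"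
      by blast
    ultimately show "K i0 \<inter> \<Inter>\<F> \<noteq> {}"
      using assms(4) by blast
  qed
  have "compactin T (K i0)"
    using assms(2,3) by blast
  then have "K i0 \<inter> \<Inter>(K ` I) \<noteq> {}"
    unfolding compactin_fip using closed fip by blast
  then show ?thesis
    by blast
qed

locale coarser_metric_closed_map = Metric_space M d
  for M :: "'a set" and d :: "'a \<Rightarrow> 'a \<Rightarrow> real" +
  fixes X :: "'a topology" and Y :: "'b topology" and f :: "'a \<Rightarrow> 'b"
  assumes topspace_X: "topspace X = M"
    and openin_X_if_openin_mtopology: "\<And>U. openin mtopology U \<Longrightarrow> openin X U"
    and Hausdorff_Y: "Hausdorff_space Y"
    and continuous_f: "continuous_map X Y f"
    and closed_f: "closed_map X Y f"
begin

lemma closure_of_X_subset: "X closure_of S \<subseteq> mtopology closure_of S"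
  unfolding in_closure_of subset_iff using topspace_X openin_X_if_openin_mtopology by auto

lemma limitin_mtopology_if_limitin_X: "limitin X q x F \<Longrightarrow> limitin mtopology q x F"
  unfolding limitin_def using topspace_X openin_X_if_openin_mtopology by auto

lemma convergent_subsequence_into_fibre:
  fixes z :: "nat \<Rightarrow> 'a"
  assumes "range z \<subseteq> M" and "\<And>n. f (z n) \<noteq> y" and "limitin Y (f \<circ> z) y sequentially"
  shows "\<exists>r w. strict_mono r \<and> f w = y \<and> limitin mtopology (z \<circ> r) w sequentially"
proof -
  obtain w where w: "w \<in> X closure_of range z" "f w = y"
    using closed_map_limit_in_image_closure[OF closed_f _ assms(3)] assms(1) topspace_X by metis
  moreover have "w \<notin> range z"
    using w(2) assms(2) by auto
  ultimately show ?thesis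
    using convergent_subsequence_if_in_closure_of_range assms(1) closure_of_X_subset by blast
qed

lemma limitin_X_if_limitin_mtopology:
  fixes z :: "nat \<Rightarrow> 'a"
  assumes "range z \<subseteq> M" and "\<And>n. z n = x \<or> f (z n) \<noteq> f x"
    and "limitin Y (f \<circ> z) (f x) sequentially" and "limitin mtopology z x sequentially"
  shows "limitin X z x sequentially"
proof (rule ccontr)
  assume "\<not> limitin X z x sequentially"
  moreover have "x \<in> topspace X"
    using assms(4) limitin_mspace topspace_X by blast
  ultimately obtain U where U: "openin X U" "x \<in> U" "\<not> (\<forall>\<^sub>F n in sequentially. z n \<in> U)"
    unfolding limitin_def by blast
  then obtain r :: "nat \<Rightarrow> nat" where r: "strict_mono r" "\<And>n. z (r n) \<notin> U"
    using not_eventually_sequentiallyD by blast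
  have "range (z \<circ> r) \<subseteq> topspace X"
    using assms(1) topspace_X by auto
  moreover have "limitin Y (f \<circ> (z \<circ> r)) (f x) sequentially"
    using limitin_subsequence[OF r(1) assms(3)] by (simp add: comp_assoc)
  ultimately obtain w where w: "w \<in> X closure_of range (z \<circ> r)" "f w = f x"
    by (rule closed_map_limit_in_image_closure[OF closed_f])
  have "X closure_of range (z \<circ> r) \<subseteq> topspace X - U"
    using r(2) assms(1) topspace_X U(1) by (intro closure_of_minimal) auto
  then have "w \<notin> U"
    using w(1) by blast
  have "compactin mtopology (insert x (range (z \<circ> r)))"
    using compactin_sequence_with_limit[OF limitin_subsequence[OF r(1) assms(4)]] assms(1) by auto
  then have "closedin mtopology (insert x (range (z \<circ> r)))"
    by (rule compactin_imp_closedin[OF Hausdorff_space_mtopology])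
  then have "mtopology closure_of range (z \<circ> r) \<subseteq> insert x (range (z \<circ> r))"
    by (simp add: closure_of_minimal subset_insertI)
  then have "w \<in> insert x (range (z \<circ> r))"
    using w(1) closure_of_X_subset by blast
  then show False
    using \<open>w \<notin> U\<close> U(2) w(2) assms(2) r(2) by (metis comp_apply imageE insertE)
qed

definition lift_limits :: "'b \<Rightarrow> (nat \<Rightarrow> 'b) \<Rightarrow> 'a set" where
  "lift_limits y p =
     {x. f x = y \<and> (\<exists>q. range q \<subseteq> M \<and> covers f q p \<and> limitin mtopology q x sequentially)}"

lemma lift_limits_subset: "lift_limits y p \<subseteq> M"
  by (auto simp: lift_limits_def intro: limitin_mspace)

lemma lifts_to_lift_limits:
  assumes "range \<sigma> \<subseteq> lift_limits y p"
  obtains Q where "\<And>n. range (Q n) \<subseteq> M" "\<And>n. covers f (Q n) p"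
    "\<And>n. limitin mtopology (Q n) (\<sigma> n) sequentially"
proof -
  have "\<forall>n. \<exists>q. range q \<subseteq> M \<and> covers f q p \<and> limitin mtopology q (\<sigma> n) sequentially"
    using assms by (auto simp: lift_limits_def image_subset_iff)
  then show ?thesis
    using that by metis
qed

lemma ConvSeq_at_lift_if_in_lift_limits:
  assumes p: "p \<in> ConvSeq_at Y y" and "x \<in> lift_limits y p"
  shows "\<exists>q\<in>ConvSeq_at X x. covers f q p"
proof -
  obtain q where q: "range q \<subseteq> M" "covers f q p" "limitin mtopology q x sequentially"
    and fx: "f x = y"
    using assms(2) by (auto simp: lift_limits_def)
  have "x \<in> M"
    using q(3) limitin_mspace by blast
  define q' where "q' n = (if p n = y then x else q n)" for n
  have q'M: "range q' \<subseteq> M"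
    using q(1) \<open>x \<in> M\<close> by (auto simp: q'_def)
  have cov: "covers f q' p"
    using q(2) fx by (auto simp: covers_def q'_def)
  have "limitin mtopology q' x sequentially"
    unfolding q'_def using q(3) by (rule limitin_metric_replace_by_limit)
  moreover have "q' n = x \<or> f (q' n) \<noteq> f x" for n
    using q(2) fx by (auto simp: q'_def covers_def)
  moreover have "limitin Y (f \<circ> q') (f x) sequentially"
    using p fx cov by (simp add: ConvSeq_at_def covers_iff_comp)
  ultimately have "limitin X q' x sequentially"
    using limitin_X_if_limitin_mtopology q'M by blast
  moreover have "\<nexists>c. \<forall>\<^sub>F n in sequentially. q' n = c"
    using not_eventually_const_if_covers[OF cov] p by (simp add: ConvSeq_at_def)
  ultimately have "q' \<in> ConvSeq_at X x"
    using q'M topspace_X by (auto simp: ConvSeq_at_def)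
  then show ?thesis
    using cov by blast
qed

lemma lift_limits_nonempty:
  assumes "sequence_covering X Y f" and "p \<in> ConvSeq_at Y y"
  shows "lift_limits y p \<noteq> {}"
proof -
  have "y \<in> topspace Y"
    using assms(2) limitin_topspace by (auto simp: ConvSeq_at_def)
  then have "p \<in> ConvSeq Y"
    using assms(2) unfolding ConvSeq_def by blast
  then obtain q x where "q \<in> ConvSeq_at X x" and cov: "covers f q p"
    using assms(1) unfolding sequence_covering_def ConvSeq_def by blast
  then have q: "range q \<subseteq> M" "limitin X q x sequentially"
    using topspace_X by (auto simp: ConvSeq_at_def)
  have "limitin Y p (f x) sequentially"
    using continuous_map_limit[OF continuous_f q(2)] cov by (simp add: covers_iff_comp)
  moreover have "limitin Y p y sequentially"
    using assms(2) by (simp add: ConvSeq_at_def)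
  ultimately have "f x = y"
    by (metis limitin_Hausdorff_unique Hausdorff_Y trivial_limit_sequentially)
  then have "x \<in> lift_limits y p"
    unfolding lift_limits_def using q(1) cov limitin_mtopology_if_limitin_X[OF q(2)] by blast
  then show ?thesis
    by blast
qed

lemma lift_limits_closed_under_limits:
  assumes "range \<sigma> \<subseteq> lift_limits y p" and "limitin mtopology \<sigma> w sequentially" and "f w = y"
  shows "w \<in> lift_limits y p"
proof -
  obtain Q where Q: "\<And>n. range (Q n) \<subseteq> M" "\<And>n. covers f (Q n) p"
    "\<And>n. limitin mtopology (Q n) (\<sigma> n) sequentially"
    using lifts_to_lift_limits[OF assms(1)] by blast
  then obtain j where "limitin mtopology (\<lambda>k. Q (j k) k) w sequentially"
    using diagonal_limitin_metric[of Q \<sigma> w] assms(2) by blast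
  moreover have "range (\<lambda>k. Q (j k) k) \<subseteq> M" "covers f (\<lambda>k. Q (j k) k) p"
    using Q(1,2) by (auto simp: covers_def)
  ultimately show ?thesis
    using assms(3) by (auto simp: lift_limits_def)
qed

lemma approximating_sequence_off_fibre:
  assumes p: "p \<in> ConvSeq_at Y y" and "range \<sigma> \<subseteq> lift_limits y p"
  obtains z where "range z \<subseteq> M" "\<And>n. f (z n) \<noteq> y" "limitin Y (f \<circ> z) y sequentially"
    "\<And>n. d (z n) (\<sigma> n) < 1 / Suc n"
proof -
  obtain Q where Q: "\<And>n. range (Q n) \<subseteq> M" "\<And>n. covers f (Q n) p"
    "\<And>n. limitin mtopology (Q n) (\<sigma> n) sequentially"
    using lifts_to_lift_limits[OF assms(2)] by blast
  have "\<exists>\<^sub>F k in sequentially. p k \<noteq> y \<and> d (Q n k) (\<sigma> n) < 1 / Suc n" for n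
  proof -
    have "\<exists>\<^sub>F k in sequentially. p k \<noteq> y"
      using p by (auto simp: ConvSeq_at_def not_eventually)
    moreover have "\<forall>\<^sub>F k in sequentially. Q n k \<in> M \<and> d (Q n k) (\<sigma> n) < 1 / Suc n"
      using Q(3)[of n] unfolding limitin_metric
      by (meson of_nat_0_less_iff zero_less_Suc zero_less_divide_1_iff)
    ultimately have "\<exists>\<^sub>F k in sequentially. (Q n k \<in> M \<and> d (Q n k) (\<sigma> n) < 1 / Suc n) \<and> p k \<noteq> y"
      by (rule frequently_eventually_conj)
    then show ?thesis
      by (rule frequently_elim1) blast
  qed
  then obtain kk where kk: "strict_mono kk" "\<And>n. p (kk n) \<noteq> y"
    "\<And>n. d (Q n (kk n)) (\<sigma> n) < 1 / Suc n"
    using strict_mono_choice_frequently[of "\<lambda>n k. p k \<noteq> y \<and> d (Q n k) (\<sigma> n) < 1 / Suc n"]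
    by blast
  define z where "z n = Q n (kk n)" for n
  have fz: "f \<circ> z = p \<circ> kk"
    using Q(2) by (auto simp: z_def covers_def)
  have "limitin Y p y sequentially"
    using p by (simp add: ConvSeq_at_def)
  then have "limitin Y (f \<circ> z) y sequentially"
    unfolding fz by (rule limitin_subsequence[OF kk(1)])
  moreover have "range z \<subseteq> M"
    using Q(1) by (auto simp: z_def)
  moreover have "f (z n) \<noteq> y" for n
    using fz kk(2) by (metis comp_apply)
  moreover have "d (z n) (\<sigma> n) < 1 / Suc n" for n
    using kk(3) by (simp add: z_def)
  ultimately show ?thesis
    using that by blast
qed

lemma compactin_lift_limits:
  assumes "p \<in> ConvSeq_at Y y"
  shows "compactin mtopology (lift_limits y p)"
  unfolding compactin_sequentially
proof (intro conjI allI impI)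
  show "lift_limits y p \<subseteq> M"
    by (rule lift_limits_subset)
  fix \<sigma> :: "nat \<Rightarrow> 'a" assume \<sigma>: "range \<sigma> \<subseteq> lift_limits y p"
  then obtain z where z: "range z \<subseteq> M" "\<And>n. f (z n) \<noteq> y" "limitin Y (f \<circ> z) y sequentially"
    "\<And>n. d (z n) (\<sigma> n) < 1 / Suc n"
    using approximating_sequence_off_fibre[OF assms] by blast
  then obtain r w where r: "strict_mono r" "f w = y" "limitin mtopology (z \<circ> r) w sequentially"
    using convergent_subsequence_into_fibre by blast
  have "(\<lambda>n. d (\<sigma> n) (z n)) \<longlonglongrightarrow> 0"
    using z(4) by (intro LIMSEQ_norm_0) (simp add: commute)
  then have "(\<lambda>n. d ((\<sigma> \<circ> r) n) ((z \<circ> r) n)) \<longlonglongrightarrow> 0"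
    using LIMSEQ_subseq_LIMSEQ[OF _ r(1)] by (simp add: comp_def)
  moreover have "range (\<sigma> \<circ> r) \<subseteq> M"
    using \<sigma> lift_limits_subset by auto
  ultimately have "limitin mtopology (\<sigma> \<circ> r) w sequentially"
    using limitin_metric_if_dist_tendsto_0[OF r(3)] by blast
  moreover have "w \<in> lift_limits y p"
    using lift_limits_closed_under_limits[OF _ calculation r(2)] \<sigma> by auto
  ultimately show "\<exists>l r. l \<in> lift_limits y p \<and> strict_mono r \<and> limitin mtopology (\<sigma> \<circ> r) l sequentially"
    using r(1) by blast
qed

lemma lift_limits_interleave:
  "lift_limits y (interleave p p') \<subseteq> lift_limits y p \<inter> lift_limits y p'"
proof
  fix x assume "x \<in> lift_limits y (interleave p p')"
  then obtain q where x: "f x = y" and q: "range q \<subseteq> M" "f \<circ> q = interleave p p'"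
    "limitin mtopology q x sequentially"
    by (auto simp: lift_limits_def covers_iff_comp)
  have "f \<circ> (q \<circ> (\<lambda>n. 2 * n)) = p" "f \<circ> (q \<circ> (\<lambda>n. Suc (2 * n))) = p'"
    by (simp_all add: comp_assoc[symmetric] q(2) interleave_comp_even interleave_comp_odd)
  moreover have "limitin mtopology (q \<circ> (\<lambda>n. 2 * n)) x sequentially"
    "limitin mtopology (q \<circ> (\<lambda>n. Suc (2 * n))) x sequentially"
    using limitin_subsequence[OF strict_mono_double q(3)]
      limitin_subsequence[OF strict_mono_Suc_double q(3)] by auto
  moreover have "range (q \<circ> (\<lambda>n. 2 * n)) \<subseteq> M" "range (q \<circ> (\<lambda>n. Suc (2 * n))) \<subseteq> M"
    using q(1) by auto
  ultimately show "x \<in> lift_limits y p \<inter> lift_limits y p'"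
    using x unfolding lift_limits_def covers_iff_comp by blast
qed

lemma one_sequence_covering_if_sequence_covering:
  assumes "sequence_covering X Y f" and "f ` topspace X = topspace Y"
  shows "one_sequence_covering X Y f"
  unfolding one_sequence_covering_def
proof
  fix y assume y: "y \<in> topspace Y"
  show "\<exists>x\<in>topspace X. f x = y \<and> (\<forall>p\<in>ConvSeq_at Y y. \<exists>q\<in>ConvSeq_at X x. covers f q p)"
  proof (cases "ConvSeq_at Y y = {}")
    case True
    obtain x where "x \<in> topspace X" "f x = y"
      using y assms(2) by (metis imageE)
    then show ?thesis
      using True by blast
  next
    case False
    then obtain p0 where p0: "p0 \<in> ConvSeq_at Y y"
      by blast
    have "(\<Inter>p\<in>ConvSeq_at Y y. lift_limits y p) \<noteq> {}"
    proof (rule Inter_directed_compactin_nonempty[OF Hausdorff_space_mtopology p0])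
      fix p assume p: "p \<in> ConvSeq_at Y y"
      then show "compactin mtopology (lift_limits y p)"
        by (rule compactin_lift_limits)
      show "lift_limits y p \<noteq> {}"
        using lift_limits_nonempty[OF assms(1) p] .
      fix p' assume "p' \<in> ConvSeq_at Y y"
      then show "\<exists>k\<in>ConvSeq_at Y y. lift_limits y k \<subseteq> lift_limits y p \<inter> lift_limits y p'"
        using interleave_in_ConvSeq_at[OF p] lift_limits_interleave by blast
    qed
    then obtain x where x: "\<And>p. p \<in> ConvSeq_at Y y \<Longrightarrow> x \<in> lift_limits y p"
      by blast
    have "x \<in> topspace X" "f x = y"
      using x[OF p0] lift_limits_subset topspace_X by (auto simp: lift_limits_def)
    moreover have "\<exists>q\<in>ConvSeq_at X x. covers f q p" if p: "p \<in> ConvSeq_at Y y" for p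
      using ConvSeq_at_lift_if_in_lift_limits[OF p x[OF p]] .
    ultimately show ?thesis
      by blast
  qed
qed

end

theorem mainTheorem1:
  fixes X :: "'a topology" and Y :: "'b topology" and f :: "'a \<Rightarrow> 'b"
  assumes "t1_space X" and "regular_space X"
    and "t1_space Y" and "regular_space Y"
    and "submetrizable X"
    and "continuous_map X Y f"
    and "f ` topspace X = topspace Y"
    and "closed_map X Y f"
    and "sequence_covering X Y f"
  shows "one_sequence_covering X Y f"
proof -
  obtain S where S: "topspace S = topspace X" "metrizable_space S" "\<And>U. openin S U \<Longrightarrow> openin X U"
    using assms(5) unfolding submetrizable_def by blast
  then obtain M d where "Metric_space M d" and S_eq: "S = Metric_space.mtopology M d"
    unfolding metrizable_space_def by blast
  have "coarser_metric_closed_map M d X Y f"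
  proof (intro coarser_metric_closed_map.intro coarser_metric_closed_map_axioms.intro)
    show "Metric_space M d"
      by fact
    show "topspace X = M"
      using S(1) S_eq \<open>Metric_space M d\<close> Metric_space.topspace_mtopology by force
    show "Hausdorff_space Y"
      using assms(3,4) regular_t1_imp_Hausdorff_space by blast
  qed (use S(3) S_eq assms(6,8) in auto)
  then show ?thesis
    using assms(9,7) by (rule coarser_metric_closed_map.one_sequence_covering_if_sequence_covering)
qed

end
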